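(* Let $\mathcal A$ be a small abelian category. The map $$\gamma_{0,\mathcal A}:\mathsf{Cob}_0(\mathcal A)\to K_0(\mathcal A),\qquad [M]\mapsto\sum_{b\in M}s(b)[X_b],$$ is a well-defined isomorphism of abelian groups.
   Context: $K_0(\mathcal A)$ is the abelian group generated by symbols $[X]$ for $X\in\mathrm{Ob}(\mathcal A)$, with relations $[X_2]=[X_1]+[X_3]$ for every short exact sequence $0\to X_1\to X_2\to X_3\to0$. An $\mathcal A$-decorated 0-foam $M$ is a finite set of points $b$, each with a sign $s(b)\in\{\pm1\}$ and an object $X_b\in\mathcal A$; $-M$ reverses all signs. An $\mathcal A$-decorated 1-foam is the realization of a finite oriented graph. Multiple edges, loops and vertexless circles are allowed. Its interior vertices are trivalent and are either "in" vertices (two edges in, one out) or "out" vertices (one in, two out). At each vertex the two edges of equal orientation type are thin and the third is thick. The foam carries a flat connection with fibers objects of $\mathcal A$: parallel transport along edges gives isomorphisms of fibers, and circles carry monodromy automorphisms. At each vertex the two thin edges are ordered (first, second), and a short exact sequence $0\to X_{\mathrm{first}}\to X_{\mathrm{thick}}\to X_{\mathrm{second}}\to0$ of nearby fibers is fixed. A boundary point has the fiber there and sign $+$ if the edge points toward it, $-$ otherwise. A 1-foam $U$ is a cobordism from $M_0$ to $M_1$ if $\partial U\cong M_1\sqcup(-M_0)$. $\mathsf{Cob}_0(\mathcal A)$ is the set of $\mathcal A$-decorated 0-foams modulo the equivalence relation generated by cobordism. It is an abelian group under disjoint union. *)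

theory Defs
  imports Main "HOL-Library.Multiset"
begin

record ('o, 'm) cat =
  cat_obj :: "'o set"
  cat_arr :: "'m set"
  cat_src :: "'m \<Rightarrow> 'o"
  cat_tgt :: "'m \<Rightarrow> 'o"
  cat_idn :: "'o \<Rightarrow> 'm"
  cat_cmp :: "'m \<Rightarrow> 'm \<Rightarrow> 'm"   (* cat_cmp C g f = g o f *)

definition hom :: "('o, 'm) cat \<Rightarrow> 'o \<Rightarrow> 'o \<Rightarrow> 'm set" where
  "hom C X Y = {f \<in> cat_arr C. cat_src C f = X \<and> cat_tgt C f = Y}"

definition category :: "('o, 'm) cat \<Rightarrow> bool" where
  "category C \<longleftrightarrow>
     (\<forall>f \<in> cat_arr C. cat_src C f \<in> cat_obj C \<and> cat_tgt C f \<in> cat_obj C)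
   \<and> (\<forall>X \<in> cat_obj C. cat_idn C X \<in> hom C X X)
   \<and> (\<forall>f \<in> cat_arr C. \<forall>g \<in> cat_arr C. cat_tgt C f = cat_src C g \<longrightarrow>
        cat_cmp C g f \<in> hom C (cat_src C f) (cat_tgt C g))
   \<and> (\<forall>f \<in> cat_arr C. cat_cmp C f (cat_idn C (cat_src C f)) = f
                      \<and> cat_cmp C (cat_idn C (cat_tgt C f)) f = f)
   \<and> (\<forall>f \<in> cat_arr C. \<forall>g \<in> cat_arr C. \<forall>h \<in> cat_arr C.
        cat_tgt C f = cat_src C g \<longrightarrow> cat_tgt C g = cat_src C h \<longrightarrow>
        cat_cmp C h (cat_cmp C g f) = cat_cmp C (cat_cmp C h g) f)"

definition iso :: "('o, 'm) cat \<Rightarrow> 'm \<Rightarrow> bool" where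
  "iso C f \<longleftrightarrow> f \<in> cat_arr C \<and>
     (\<exists>g \<in> hom C (cat_tgt C f) (cat_src C f).
        cat_cmp C g f = cat_idn C (cat_src C f) \<and> cat_cmp C f g = cat_idn C (cat_tgt C f))"

definition mono :: "('o, 'm) cat \<Rightarrow> 'm \<Rightarrow> bool" where
  "mono C f \<longleftrightarrow> f \<in> cat_arr C \<and>
     (\<forall>g \<in> cat_arr C. \<forall>h \<in> cat_arr C.
        cat_tgt C g = cat_src C f \<longrightarrow> cat_tgt C h = cat_src C f \<longrightarrow> cat_src C g = cat_src C h \<longrightarrow>
        cat_cmp C f g = cat_cmp C f h \<longrightarrow> g = h)"

definition epi :: "('o, 'm) cat \<Rightarrow> 'm \<Rightarrow> bool" where
  "epi C f \<longleftrightarrow> f \<in> cat_arr C \<and>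
     (\<forall>g \<in> cat_arr C. \<forall>h \<in> cat_arr C.
        cat_src C g = cat_tgt C f \<longrightarrow> cat_src C h = cat_tgt C f \<longrightarrow> cat_tgt C g = cat_tgt C h \<longrightarrow>
        cat_cmp C g f = cat_cmp C h f \<longrightarrow> g = h)"

definition zero_obj :: "('o, 'm) cat \<Rightarrow> 'o \<Rightarrow> bool" where
  "zero_obj C z \<longleftrightarrow> z \<in> cat_obj C \<and>
     (\<forall>X \<in> cat_obj C. (\<exists>!f. f \<in> hom C z X) \<and> (\<exists>!f. f \<in> hom C X z))"

definition zero_arr :: "('o, 'm) cat \<Rightarrow> 'm \<Rightarrow> bool" where
  "zero_arr C f \<longleftrightarrow> f \<in> cat_arr C \<and>
     (\<exists>z a b. zero_obj C z \<and> a \<in> hom C (cat_src C f) z \<and> b \<in> hom C z (cat_tgt C f)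
              \<and> f = cat_cmp C b a)"

definition is_kernel :: "('o, 'm) cat \<Rightarrow> 'm \<Rightarrow> 'm \<Rightarrow> bool" where
  "is_kernel C k f \<longleftrightarrow> k \<in> cat_arr C \<and> f \<in> cat_arr C \<and> cat_tgt C k = cat_src C f
     \<and> zero_arr C (cat_cmp C f k)
     \<and> (\<forall>h \<in> cat_arr C. cat_tgt C h = cat_src C f \<and> zero_arr C (cat_cmp C f h) \<longrightarrow>
          (\<exists>!u. u \<in> hom C (cat_src C h) (cat_src C k) \<and> cat_cmp C k u = h))"

definition is_cokernel :: "('o, 'm) cat \<Rightarrow> 'm \<Rightarrow> 'm \<Rightarrow> bool" where
  "is_cokernel C q f \<longleftrightarrow> q \<in> cat_arr C \<and> f \<in> cat_arr C \<and> cat_src C q = cat_tgt C f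
     \<and> zero_arr C (cat_cmp C q f)
     \<and> (\<forall>h \<in> cat_arr C. cat_src C h = cat_tgt C f \<and> zero_arr C (cat_cmp C h f) \<longrightarrow>
          (\<exists>!u. u \<in> hom C (cat_tgt C q) (cat_tgt C h) \<and> cat_cmp C u q = h))"

definition has_binary_products :: "('o, 'm) cat \<Rightarrow> bool" where
  "has_binary_products C \<longleftrightarrow> (\<forall>X \<in> cat_obj C. \<forall>Y \<in> cat_obj C. \<exists>P p q.
     p \<in> hom C P X \<and> q \<in> hom C P Y \<and>
     (\<forall>W f g. f \<in> hom C W X \<and> g \<in> hom C W Y \<longrightarrow>
        (\<exists>!u. u \<in> hom C W P \<and> cat_cmp C p u = f \<and> cat_cmp C q u = g)))"

definition has_binary_coproducts :: "('o, 'm) cat \<Rightarrow> bool" where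
  "has_binary_coproducts C \<longleftrightarrow> (\<forall>X \<in> cat_obj C. \<forall>Y \<in> cat_obj C. \<exists>S i j.
     i \<in> hom C X S \<and> j \<in> hom C Y S \<and>
     (\<forall>W f g. f \<in> hom C X W \<and> g \<in> hom C Y W \<longrightarrow>
        (\<exists>!u. u \<in> hom C S W \<and> cat_cmp C u i = f \<and> cat_cmp C u j = g)))"

text \<open>Abelian category (Freyd--Mitchell definition). Smallness is automatic:
  the objects form a set.\<close>
definition abelian_cat :: "('o, 'm) cat \<Rightarrow> bool" where
  "abelian_cat C \<longleftrightarrow> category C
   \<and> (\<exists>z. zero_obj C z)
   \<and> has_binary_products C \<and> has_binary_coproducts C
   \<and> (\<forall>f \<in> cat_arr C. (\<exists>k. is_kernel C k f) \<and> (\<exists>q. is_cokernel C q f))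
   \<and> (\<forall>f. mono C f \<longrightarrow> (\<exists>g. is_kernel C f g))
   \<and> (\<forall>f. epi C f \<longrightarrow> (\<exists>g. is_cokernel C f g))"

definition short_exact :: "('o, 'm) cat \<Rightarrow> 'm \<Rightarrow> 'm \<Rightarrow> bool" where
  "short_exact C f g \<longleftrightarrow> is_kernel C f g \<and> is_cokernel C g f"

text \<open>Free abelian group on the objects: finitely supported integer functions.\<close>
definition free_ab :: "('o, 'm) cat \<Rightarrow> ('o \<Rightarrow> int) set" where
  "free_ab C = {\<phi>. finite {X. \<phi> X \<noteq> 0} \<and> {X. \<phi> X \<noteq> 0} \<subseteq> cat_obj C}"

definition delta :: "'o \<Rightarrow> 'o \<Rightarrow> int" where
  "delta X = (\<lambda>Y. if Y = X then 1 else 0)"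

inductive_set K0_relations :: "('o, 'm) cat \<Rightarrow> ('o \<Rightarrow> int) set" for C where
  zero: "(\<lambda>_. 0) \<in> K0_relations C"
| gen: "short_exact C f g \<Longrightarrow>
        (\<lambda>Y. delta (cat_tgt C f) Y - delta (cat_src C f) Y - delta (cat_tgt C g) Y) \<in> K0_relations C"
| add: "\<phi> \<in> K0_relations C \<Longrightarrow> \<psi> \<in> K0_relations C \<Longrightarrow> (\<lambda>Y. \<phi> Y + \<psi> Y) \<in> K0_relations C"
| neg: "\<phi> \<in> K0_relations C \<Longrightarrow> (\<lambda>Y. - \<phi> Y) \<in> K0_relations C"

definition K0_rel :: "('o, 'm) cat \<Rightarrow> (('o \<Rightarrow> int) \<times> ('o \<Rightarrow> int)) set" where
  "K0_rel C = {(\<phi>, \<psi>). \<phi> \<in> free_ab C \<and> \<psi> \<in> free_ab C \<and> (\<lambda>Y. \<phi> Y - \<psi> Y) \<in> K0_relations C}"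

text \<open>K_0(A) as a set of classes; the group law is induced by pointwise addition.\<close>
definition K0 :: "('o, 'm) cat \<Rightarrow> ('o \<Rightarrow> int) set set" where
  "K0 C = free_ab C // K0_rel C"

text \<open>A decorated 0-foam up to isomorphism: a finite multiset of points (sign, object),
  sign True meaning +. Disjoint union is multiset sum.\<close>
type_synonym 'o zfoam = "(bool \<times> 'o) multiset"

definition zfoams :: "('o, 'm) cat \<Rightarrow> 'o zfoam set" where
  "zfoams C = {M. \<forall>p \<in># M. snd p \<in> cat_obj C}"

definition zneg :: "'o zfoam \<Rightarrow> 'o zfoam" where
  "zneg M = image_mset (\<lambda>(s, X). (\<not> s, X)) M"

datatype side = Hd | Tl
datatype vkind = VIn | VOut | VBd

type_synonym edge_end = "nat \<times> side"

record ('o, 'm) foam1 =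
  fV :: "nat set"
  fE :: "nat set"
  ftl :: "nat \<Rightarrow> nat"
  fhd :: "nat \<Rightarrow> nat"
  fXt :: "nat \<Rightarrow> 'o"        (* fiber near the tail *)
  fXh :: "nat \<Rightarrow> 'o"        (* fiber near the head *)
  ftr :: "nat \<Rightarrow> 'm"        (* parallel transport tail -> head *)
  fkind :: "nat \<Rightarrow> vkind"
  ffirst :: "nat \<Rightarrow> edge_end"   (* first thin edge-end at a vertex *)
  fsecond :: "nat \<Rightarrow> edge_end"  (* second thin edge-end *)
  fthick :: "nat \<Rightarrow> edge_end"   (* thick edge-end *)
  fses1 :: "nat \<Rightarrow> 'm"
  fses2 :: "nat \<Rightarrow> 'm"
  fCirc :: "nat set"         (* vertexless circles *)
  fcobj :: "nat \<Rightarrow> 'o"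
  fcmon :: "nat \<Rightarrow> 'm"      (* monodromy of a circle *)

fun end_vertex :: "('o, 'm, 'z) foam1_scheme \<Rightarrow> edge_end \<Rightarrow> nat" where
  "end_vertex U (e, Hd) = fhd U e"
| "end_vertex U (e, Tl) = ftl U e"

fun end_fiber :: "('o, 'm, 'z) foam1_scheme \<Rightarrow> edge_end \<Rightarrow> 'o" where
  "end_fiber U (e, Hd) = fXh U e"
| "end_fiber U (e, Tl) = fXt U e"

definition ends :: "('o, 'm, 'z) foam1_scheme \<Rightarrow> edge_end set" where
  "ends U = fE U \<times> UNIV"

definition ends_at :: "('o, 'm, 'z) foam1_scheme \<Rightarrow> nat \<Rightarrow> edge_end set" where
  "ends_at U v = {x \<in> ends U. end_vertex U x = v}"

definition wf_vertex :: "('o, 'm) cat \<Rightarrow> ('o, 'm, 'z) foam1_scheme \<Rightarrow> nat \<Rightarrow> side \<Rightarrow> side \<Rightarrow> bool" where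
  "wf_vertex C U v thin thk \<longleftrightarrow>
     ends_at U v = {ffirst U v, fsecond U v, fthick U v} \<and> card (ends_at U v) = 3
   \<and> snd (ffirst U v) = thin \<and> snd (fsecond U v) = thin \<and> snd (fthick U v) = thk
   \<and> fses1 U v \<in> hom C (end_fiber U (ffirst U v)) (end_fiber U (fthick U v))
   \<and> fses2 U v \<in> hom C (end_fiber U (fthick U v)) (end_fiber U (fsecond U v))
   \<and> short_exact C (fses1 U v) (fses2 U v)"

definition wf_foam :: "('o, 'm) cat \<Rightarrow> ('o, 'm) foam1 \<Rightarrow> bool" where
  "wf_foam C U \<longleftrightarrow> finite (fV U) \<and> finite (fE U) \<and> finite (fCirc U)
   \<and> (\<forall>e \<in> fE U. ftl U e \<in> fV U \<and> fhd U e \<in> fV U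
        \<and> ftr U e \<in> hom C (fXt U e) (fXh U e) \<and> iso C (ftr U e))
   \<and> (\<forall>c \<in> fCirc U. fcmon U c \<in> hom C (fcobj U c) (fcobj U c) \<and> iso C (fcmon U c))
   \<and> (\<forall>v \<in> fV U. case fkind U v of
         VBd \<Rightarrow> card (ends_at U v) = 1
       | VIn \<Rightarrow> wf_vertex C U v Hd Tl
       | VOut \<Rightarrow> wf_vertex C U v Tl Hd)"

text \<open>Boundary: one point per boundary vertex; sign + iff the edge points toward it.\<close>
definition foam_boundary :: "('o, 'm) foam1 \<Rightarrow> 'o zfoam" where
  "foam_boundary U = image_mset (\<lambda>x. (snd x = Hd, end_fiber U x))
      (mset_set {x \<in> ends U. fkind U (end_vertex U x) = VBd})"

definition cobordant :: "('o, 'm) cat \<Rightarrow> 'o zfoam \<Rightarrow> 'o zfoam \<Rightarrow> bool" where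
  "cobordant C M0 M1 \<longleftrightarrow> (\<exists>U. wf_foam C U \<and> foam_boundary U = M1 + zneg M0)"

definition cob_rel :: "('o, 'm) cat \<Rightarrow> ('o zfoam \<times> 'o zfoam) set" where
  "cob_rel C = {(M, N). M \<in> zfoams C \<and> N \<in> zfoams C \<and>
      (\<lambda>A B. cobordant C A B \<or> cobordant C B A)\<^sup>*\<^sup>* M N}"

definition Cob0 :: "('o, 'm) cat \<Rightarrow> 'o zfoam set set" where
  "Cob0 C = zfoams C // cob_rel C"

definition gamma0 :: "'o zfoam \<Rightarrow> 'o \<Rightarrow> int" where
  "gamma0 M = (\<lambda>Y. int (count M (True, Y)) - int (count M (False, Y)))"

end

theory Submission
  imports Defs
begin

text \<open>A 1-foam contributes nothing to K_0. Summing the signed classes of all its edge-ends,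
  every edge contributes [fiber at head] - [fiber at tail] = 0, because parallel transport is an
  isomorphism, and the three ends at an interior vertex contribute
  \<open>\<plusminus>\<close>([thick] - [first] - [second]) = 0 by its short exact sequence; the ends that remain are
  exactly the signed boundary points. Hence \<open>\<gamma>\<close> is well defined on cobordism classes.
  Conversely, arcs show that every 0-foam whose points cancel in pairs (+, X), (-, X) is a
  boundary, so 0-foams with equal \<open>\<gamma>\<close> are cobordant, and a single trivalent vertex realises each
  defining relation of K_0. Every element of the relation subgroup is therefore the difference of
  the \<open>\<gamma>\<close>-values of two boundaries, which gives injectivity. Surjectivity holds because every
  formal sum of objects is \<open>\<gamma>\<close> of some 0-foam.\<close>

lemma categoryD:
  assumes "category C"
  shows cat_hom_obj: "f \<in> hom C X Y \<Longrightarrow> X \<in> cat_obj C \<and> Y \<in> cat_obj C"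
  and cat_idn_hom: "X \<in> cat_obj C \<Longrightarrow> cat_idn C X \<in> hom C X X"
  and cat_cmp_hom: "f \<in> hom C X Y \<Longrightarrow> g \<in> hom C Y Z \<Longrightarrow> cat_cmp C g f \<in> hom C X Z"
  and cat_idr: "f \<in> hom C X Y \<Longrightarrow> cat_cmp C f (cat_idn C X) = f"
  and cat_idl: "f \<in> hom C X Y \<Longrightarrow> cat_cmp C (cat_idn C Y) f = f"
  and cat_assoc: "f \<in> hom C X Y \<Longrightarrow> g \<in> hom C Y Z \<Longrightarrow> h \<in> hom C Z W \<Longrightarrow>
        cat_cmp C h (cat_cmp C g f) = cat_cmp C (cat_cmp C h g) f"
  using assms unfolding category_def hom_def by auto

lemma homD: "f \<in> hom C X Y \<Longrightarrow> f \<in> cat_arr C \<and> cat_src C f = X \<and> cat_tgt C f = Y"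
  by (simp add: hom_def)

lemma isoE:
  assumes "iso C f" "f \<in> hom C X Y"
  obtains g where "g \<in> hom C Y X" "cat_cmp C g f = cat_idn C X" "cat_cmp C f g = cat_idn C Y"
  using assms unfolding iso_def hom_def by auto

lemma iso_cat_idn: assumes "category C" "X \<in> cat_obj C" shows "iso C (cat_idn C X)"
proof -
  have idn: "cat_idn C X \<in> hom C X X" using cat_idn_hom[OF assms] .
  moreover have "cat_cmp C (cat_idn C X) (cat_idn C X) = cat_idn C X" using cat_idl[OF assms(1) idn] .
  ultimately show ?thesis unfolding iso_def hom_def by auto
qed

lemma zero_objD:
  assumes "zero_obj C z" "X \<in> cat_obj C"
  shows "\<exists>!f. f \<in> hom C z X" "\<exists>!f. f \<in> hom C X z"
  using assms unfolding zero_obj_def by auto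

lemma zero_arr_into_zero_obj:
  assumes C: "category C" and z: "zero_obj C z" and h: "h \<in> hom C X z"
  shows "zero_arr C h"
proof -
  have "z \<in> cat_obj C" using z by (simp add: zero_obj_def)
  then have "cat_idn C z \<in> hom C z z" using cat_idn_hom[OF C] by blast
  moreover have "h = cat_cmp C (cat_idn C z) h" using cat_idl[OF C h] by simp
  ultimately show ?thesis unfolding zero_arr_def using h z homD[OF h] by blast
qed

lemma is_kernel_iso:
  assumes C: "category C" and f: "f \<in> hom C X Y" "iso C f" and g: "g \<in> hom C Y Z"
    and gf: "zero_arr C (cat_cmp C g f)"
  shows "is_kernel C f g"
  unfolding is_kernel_def
proof (intro conjI ballI impI)
  obtain f' where f': "f' \<in> hom C Y X" "cat_cmp C f' f = cat_idn C X" "cat_cmp C f f' = cat_idn C Y"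
    using isoE[OF f(2,1)] .
  show "f \<in> cat_arr C" "g \<in> cat_arr C" "cat_tgt C f = cat_src C g" using f g by (auto simp: hom_def)
  show "zero_arr C (cat_cmp C g f)" by fact
  fix h assume h: "h \<in> cat_arr C" "cat_tgt C h = cat_src C g \<and> zero_arr C (cat_cmp C g h)"
  have hY: "h \<in> hom C (cat_src C h) Y" using h g by (auto simp: hom_def)
  have src_f: "cat_src C f = X" using f by (simp add: hom_def)
  show "\<exists>!u. u \<in> hom C (cat_src C h) (cat_src C f) \<and> cat_cmp C f u = h"
  proof (rule ex1I[of _ "cat_cmp C f' h"])
    have "cat_cmp C f (cat_cmp C f' h) = cat_cmp C (cat_idn C Y) h"
      using cat_assoc[OF C hY f'(1) f(1)] f'(3) by simp
    also have "\<dots> = h" using cat_idl[OF C hY] .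
    finally show "cat_cmp C f' h \<in> hom C (cat_src C h) (cat_src C f) \<and> cat_cmp C f (cat_cmp C f' h) = h"
      using cat_cmp_hom[OF C hY f'(1)] src_f by simp
  next
    fix u assume u: "u \<in> hom C (cat_src C h) (cat_src C f) \<and> cat_cmp C f u = h"
    then have uX: "u \<in> hom C (cat_src C h) X" using src_f by simp
    have "cat_cmp C f' h = cat_cmp C f' (cat_cmp C f u)" using u by simp
    also have "\<dots> = cat_cmp C (cat_idn C X) u" using cat_assoc[OF C uX f(1) f'(1)] f'(2) by simp
    also have "\<dots> = u" using cat_idl[OF C uX] .
    finally show "u = cat_cmp C f' h" by simp
  qed
qed

lemma is_cokernel_to_zero_obj:
  assumes C: "category C" and f: "f \<in> hom C X Y" "iso C f" and g: "g \<in> hom C Y z"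
    and z: "zero_obj C z"
  shows "is_cokernel C g f"
  unfolding is_cokernel_def
proof (intro conjI ballI impI)
  obtain f' where f': "f' \<in> hom C Y X" "cat_cmp C f' f = cat_idn C X" "cat_cmp C f f' = cat_idn C Y"
    using isoE[OF f(2,1)] .
  have Y: "Y \<in> cat_obj C" using cat_hom_obj[OF C f(1)] by blast
  have z_obj: "z \<in> cat_obj C" using z by (simp add: zero_obj_def)
  show "f \<in> cat_arr C" "g \<in> cat_arr C" "cat_src C g = cat_tgt C f" using f g by (auto simp: hom_def)
  show "zero_arr C (cat_cmp C g f)" using zero_arr_into_zero_obj[OF C z cat_cmp_hom[OF C f(1) g]] .
  fix h assume h: "h \<in> cat_arr C" "cat_src C h = cat_tgt C f \<and> zero_arr C (cat_cmp C h f)"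
  define W where "W = cat_tgt C h"
  have hW: "h \<in> hom C Y W" using h f by (auto simp: hom_def W_def)
  have tgt_g: "cat_tgt C g = z" using g by (simp add: hom_def)
  have out_of_z: "\<exists>!u. u \<in> hom C z W" using zero_objD(1)[OF z] cat_hom_obj[OF C hW] by blast
  obtain z' a b where z': "zero_obj C z'" and a: "a \<in> hom C X z'" and b: "b \<in> hom C z' W"
    and hf: "cat_cmp C h f = cat_cmp C b a"
    using h(2) homD[OF cat_cmp_hom[OF C f(1) hW]] unfolding zero_arr_def by auto
  obtain c where c: "c \<in> hom C z z'" using zero_objD(2)[OF z' z_obj] by blast
  \<comment> \<open>both composites are arrows into the zero object \<open>z'\<close>\<close>
  have "cat_cmp C a f' = cat_cmp C c g"
    using zero_objD(2)[OF z' Y] cat_cmp_hom[OF C f'(1) a] cat_cmp_hom[OF C g c] by blast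
  have "h = cat_cmp C h (cat_idn C Y)" using cat_idr[OF C hW] by simp
  also have "\<dots> = cat_cmp C (cat_cmp C h f) f'" using cat_assoc[OF C f'(1) f(1) hW] f'(3) by simp
  also have "\<dots> = cat_cmp C b (cat_cmp C a f')" using hf cat_assoc[OF C f'(1) a b] by simp
  also have "\<dots> = cat_cmp C (cat_cmp C b c) g"
    using \<open>cat_cmp C a f' = cat_cmp C c g\<close> cat_assoc[OF C g c b] by simp
  finally have "h = cat_cmp C (cat_cmp C b c) g" .
  then show "\<exists>!u. u \<in> hom C (cat_tgt C g) (cat_tgt C h) \<and> cat_cmp C u g = h"
    using out_of_z cat_cmp_hom[OF C c b] tgt_g W_def by metis
qed

lemma short_exact_iso_to_zero_obj:
  assumes C: "category C" and f: "f \<in> hom C X Y" "iso C f" and g: "g \<in> hom C Y z"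
    and z: "zero_obj C z"
  shows "short_exact C f g"
  unfolding short_exact_def
  using is_kernel_iso[OF C f g zero_arr_into_zero_obj[OF C z cat_cmp_hom[OF C f(1) g]]]
    is_cokernel_to_zero_obj[OF C f g z] by blast

lemma K0_relations_diff:
  "\<phi> \<in> K0_relations C \<Longrightarrow> \<psi> \<in> K0_relations C \<Longrightarrow> (\<lambda>Y. \<phi> Y - \<psi> Y) \<in> K0_relations C"
  using K0_relations.add[OF _ K0_relations.neg] by simp

lemma K0_relations_sum:
  "finite A \<Longrightarrow> (\<And>x. x \<in> A \<Longrightarrow> f x \<in> K0_relations C) \<Longrightarrow> (\<lambda>Y. \<Sum>x\<in>A. f x Y) \<in> K0_relations C"
proof (induction A rule: finite_induct)
  case empty
  then show ?case using K0_relations.zero by simp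
next
  case (insert a A)
  then show ?case using K0_relations.add[of "f a" C "\<lambda>Y. \<Sum>x\<in>A. f x Y"] by simp
qed

lemma K0_relations_short_exact:
  assumes "short_exact C f g" "f \<in> hom C X Y" "g \<in> hom C Y Z"
  shows "(\<lambda>W. delta Y W - delta X W - delta Z W) \<in> K0_relations C"
  using K0_relations.gen[OF assms(1)] assms(2,3) by (simp add: hom_def)

lemma K0_relations_iso:
  assumes C: "category C" and z: "zero_obj C z" and f: "f \<in> hom C X Y" "iso C f"
  shows "(\<lambda>W. delta Y W - delta X W) \<in> K0_relations C"
proof -
  have z_obj: "z \<in> cat_obj C" using z by (simp add: zero_obj_def)
  obtain g where g: "g \<in> hom C Y z" using zero_objD(2)[OF z] cat_hom_obj[OF C f(1)] by blast
  obtain g0 where g0: "g0 \<in> hom C z z" using zero_objD(2)[OF z z_obj] by blast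
  note idn = cat_idn_hom[OF C z_obj] iso_cat_idn[OF C z_obj]
  have "(\<lambda>W. delta Y W - delta X W - delta z W) \<in> K0_relations C"
    using K0_relations_short_exact[OF short_exact_iso_to_zero_obj[OF C f g z] f(1) g] .
  moreover
  \<comment> \<open>the short exact sequence \<open>z \<rightarrow> z \<rightarrow> z\<close> shows \<open>[z] = 0\<close>\<close>
  have "(\<lambda>W. delta z W - delta z W - delta z W) \<in> K0_relations C"
    using K0_relations_short_exact[OF short_exact_iso_to_zero_obj[OF C idn g0 z] idn(1) g0] .
  ultimately show ?thesis using K0_relations_diff by fastforce
qed

lemma free_abI:
  "finite S \<Longrightarrow> S \<subseteq> cat_obj C \<Longrightarrow> (\<And>Y. \<phi> Y \<noteq> 0 \<Longrightarrow> Y \<in> S) \<Longrightarrow> \<phi> \<in> free_ab C"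
  unfolding free_ab_def by (auto intro: finite_subset)

lemma equiv_K0_rel: "equiv (free_ab C) (K0_rel C)"
proof (rule equivI)
  show "refl_on (free_ab C) (K0_rel C)"
    unfolding refl_on_def K0_rel_def using K0_relations.zero by auto
  show "sym (K0_rel C)"
    unfolding sym_def K0_rel_def using K0_relations.neg by fastforce
  show "trans (K0_rel C)"
    unfolding trans_def K0_rel_def using K0_relations.add by fastforce
qed (auto simp: K0_rel_def)

lemma gamma0_plus: "gamma0 (M + N) = (\<lambda>Y. gamma0 M Y + gamma0 N Y)"
  by (auto simp: gamma0_def)

lemma count_zneg: "count (zneg M) (s, X) = count M (\<not> s, X)"
  by (induction M) (auto simp: zneg_def)

lemma gamma0_zneg: "gamma0 (zneg M) = (\<lambda>Y. - gamma0 M Y)"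
  by (auto simp: gamma0_def count_zneg)

lemma zfoams_plus: "M \<in> zfoams C \<Longrightarrow> N \<in> zfoams C \<Longrightarrow> M + N \<in> zfoams C"
  by (auto simp: zfoams_def)

lemma zfoams_zneg: "M \<in> zfoams C \<Longrightarrow> zneg M \<in> zfoams C"
  by (auto simp: zfoams_def zneg_def)

lemma gamma0_in_free_ab: "M \<in> zfoams C \<Longrightarrow> gamma0 M \<in> free_ab C"
proof (rule free_abI[of "snd ` set_mset M"])
  fix Y assume "gamma0 M Y \<noteq> 0"
  then have "(True, Y) \<in># M \<or> (False, Y) \<in># M" by (auto simp: gamma0_def not_in_iff)
  then show "Y \<in> snd ` set_mset M" by force
qed (auto simp: zfoams_def)

lemma gamma0_onto_free_ab:
  assumes "\<phi> \<in> free_ab C"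
  shows "\<exists>M \<in> zfoams C. gamma0 M = \<phi>"
proof -
  have "finite S \<Longrightarrow> S \<subseteq> cat_obj C \<Longrightarrow> (\<And>Y. \<phi> Y \<noteq> 0 \<Longrightarrow> Y \<in> S) \<Longrightarrow> \<exists>M \<in> zfoams C. gamma0 M = \<phi>"
    for S \<phi>
  proof (induction S arbitrary: \<phi> rule: finite_induct)
    case empty
    then have "\<phi> = (\<lambda>_. 0)" by auto
    then show ?case by (intro bexI[of _ "{#}"]) (auto simp: gamma0_def zfoams_def)
  next
    case (insert X S)
    have "(\<phi>(X := 0)) Y \<noteq> 0 \<Longrightarrow> Y \<in> S" for Y using insert.prems(2)[of Y] by (auto split: if_splits)
    then obtain M where M: "M \<in> zfoams C" "gamma0 M = \<phi>(X := 0)"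
      using insert.IH insert.prems(1) by blast
    define P where
      "P = replicate_mset (nat (\<phi> X)) (True, X) + replicate_mset (nat (- \<phi> X)) (False, X)"
    have "P \<in> zfoams C" using insert.prems by (auto simp: zfoams_def P_def)
    moreover have "gamma0 P = (\<lambda>Y. if Y = X then \<phi> X else 0)"
      unfolding gamma0_def P_def by (auto simp: fun_eq_iff)
    ultimately show ?case
      using M zfoams_plus by (intro bexI[of _ "M + P"]) (auto simp: gamma0_plus fun_eq_iff)
  qed
  then show ?thesis using assms unfolding free_ab_def by blast
qed

definition boundary_ends :: "('o, 'm, 'z) foam1_scheme \<Rightarrow> edge_end set" where
  "boundary_ends U = {x \<in> ends U. fkind U (end_vertex U x) = VBd}"

definition interior_vertices :: "('o, 'm, 'z) foam1_scheme \<Rightarrow> nat set" where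
  "interior_vertices U = {v \<in> fV U. fkind U v \<noteq> VBd}"

definition end_weight :: "('o, 'm, 'z) foam1_scheme \<Rightarrow> edge_end \<Rightarrow> 'o \<Rightarrow> int" where
  "end_weight U x Y = (if snd x = Hd then delta (end_fiber U x) Y else - delta (end_fiber U x) Y)"

definition wf_vertex_kind :: "('o, 'm) cat \<Rightarrow> ('o, 'm) foam1 \<Rightarrow> nat \<Rightarrow> bool" where
  "wf_vertex_kind C U v \<longleftrightarrow> (case fkind U v of
       VBd \<Rightarrow> card (ends_at U v) = 1
     | VIn \<Rightarrow> wf_vertex C U v Hd Tl
     | VOut \<Rightarrow> wf_vertex C U v Tl Hd)"

lemma wf_foam_iff:
  "wf_foam C U \<longleftrightarrow> finite (fV U) \<and> finite (fE U) \<and> finite (fCirc U)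
   \<and> (\<forall>e \<in> fE U. ftl U e \<in> fV U \<and> fhd U e \<in> fV U
        \<and> ftr U e \<in> hom C (fXt U e) (fXh U e) \<and> iso C (ftr U e))
   \<and> (\<forall>c \<in> fCirc U. fcmon U c \<in> hom C (fcobj U c) (fcobj U c) \<and> iso C (fcmon U c))
   \<and> (\<forall>v \<in> fV U. wf_vertex_kind C U v)"
  by (simp add: wf_foam_def wf_vertex_kind_def)

lemma UNIV_side: "(UNIV :: side set) = {Hd, Tl}"
  using side.exhaust by auto

lemma finite_ends: "finite (fE U) \<Longrightarrow> finite (ends U)"
  unfolding ends_def by (simp add: UNIV_side)

lemma finite_boundary_ends: "finite (fE U) \<Longrightarrow> finite (boundary_ends U)"
  by (simp add: boundary_ends_def finite_ends)

lemma end_vertex_in_fV: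
  assumes "wf_foam C U" "x \<in> ends U"
  shows "end_vertex U x \<in> fV U"
proof -
  obtain e s where "x = (e, s)" "e \<in> fE U" using assms(2) by (auto simp: ends_def)
  then show ?thesis using assms(1) by (cases s) (auto simp: wf_foam_def)
qed

lemma end_fiber_in_cat_obj:
  assumes "category C" "wf_foam C U" "x \<in> ends U"
  shows "end_fiber U x \<in> cat_obj C"
proof -
  obtain e s where "x = (e, s)" "e \<in> fE U" using assms(3) by (auto simp: ends_def)
  then show ?thesis using assms(1,2) by (cases s) (auto simp: wf_foam_def dest: cat_hom_obj[OF assms(1)])
qed

lemma gamma0_image_mset_mset_set:
  "finite A \<Longrightarrow>
   gamma0 (image_mset (\<lambda>x. (s x, X x)) (mset_set A)) Y = (\<Sum>x\<in>A. if s x then delta (X x) Y else - delta (X x) Y)"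
  by (induction A rule: finite_induct) (auto simp: gamma0_def delta_def)

lemma gamma0_foam_boundary:
  "finite (fE U) \<Longrightarrow> gamma0 (foam_boundary U) Y = (\<Sum>x\<in>boundary_ends U. end_weight U x Y)"
  unfolding foam_boundary_def boundary_ends_def[symmetric] end_weight_def
  by (rule gamma0_image_mset_mset_set[OF finite_boundary_ends])

lemma sum_end_weight_ends:
  "(\<Sum>x\<in>ends U. end_weight U x Y) = (\<Sum>e\<in>fE U. delta (fXh U e) Y - delta (fXt U e) Y)"
proof -
  have "(\<Sum>x\<in>ends U. end_weight U x Y) = (\<Sum>e\<in>fE U. \<Sum>s\<in>UNIV. end_weight U (e, s) Y)"
    unfolding ends_def sum.cartesian_product by (simp add: case_prod_unfold)
  then show ?thesis by (simp add: UNIV_side end_weight_def)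
qed

lemma distinct_if_card_3: "card {p, q, t} = 3 \<Longrightarrow> p \<noteq> q \<and> p \<noteq> t \<and> q \<noteq> t"
  by (auto simp: card_insert_if split: if_splits)

lemma sum_end_weight_ends_at_vertex:
  assumes w: "wf_vertex C U v thin thick" and sides: "thin \<noteq> thick"
  shows "(\<lambda>Y. \<Sum>x\<in>ends_at U v. end_weight U x Y) \<in> K0_relations C"
proof -
  let ?p = "ffirst U v" and ?q = "fsecond U v" and ?t = "fthick U v"
  let ?ses = "\<lambda>Y. delta (end_fiber U ?t) Y - delta (end_fiber U ?p) Y - delta (end_fiber U ?q) Y"
  have ends: "ends_at U v = {?p, ?q, ?t}" and card: "card {?p, ?q, ?t} = 3"
    using w unfolding wf_vertex_def by auto
  from distinct_if_card_3[OF card] have sum: "(\<Sum>x\<in>ends_at U v. end_weight U x Y) = end_weight U ?p Y + end_weight U ?q Y + end_weight U ?t Y"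
    for Y by (simp add: ends algebra_simps)
  have "short_exact C (fses1 U v) (fses2 U v)"
    "fses1 U v \<in> hom C (end_fiber U ?p) (end_fiber U ?t)" "fses2 U v \<in> hom C (end_fiber U ?t) (end_fiber U ?q)"
    using w by (simp_all add: wf_vertex_def)
  then have ses: "?ses \<in> K0_relations C" by (rule K0_relations_short_exact)
  have "snd ?p = thin" "snd ?q = thin" "snd ?t = thick" using w by (simp_all add: wf_vertex_def)
  then have eq: "(\<lambda>Y. \<Sum>x\<in>ends_at U v. end_weight U x Y) = (if thick = Hd then ?ses else (\<lambda>Y. - ?ses Y))"
    unfolding sum using sides by (cases thin; cases thick) (simp_all add: end_weight_def fun_eq_iff)
  show ?thesis
  proof (cases "thick = Hd")
    case True
    with eq ses show ?thesis by simp
  next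
    case False
    with eq K0_relations.neg[OF ses] show ?thesis by simp
  qed
qed

lemma sum_end_weight_interior:
  assumes U: "wf_foam C U"
  shows "(\<Sum>x\<in>ends U - boundary_ends U. end_weight U x Y)
       = (\<Sum>v\<in>interior_vertices U. \<Sum>x\<in>ends_at U v. end_weight U x Y)"
proof -
  have fin: "finite (ends U - boundary_ends U)" "finite (interior_vertices U)"
    using U finite_ends by (auto simp: wf_foam_def interior_vertices_def)
  have "end_vertex U ` (ends U - boundary_ends U) \<subseteq> interior_vertices U"
    using end_vertex_in_fV[OF U] by (auto simp: boundary_ends_def interior_vertices_def)
  from sum.group[OF fin this, of "\<lambda>x. end_weight U x Y"]
  have "(\<Sum>x\<in>ends U - boundary_ends U. end_weight U x Y)
      = (\<Sum>v\<in>interior_vertices U. \<Sum>x\<in>{x \<in> ends U - boundary_ends U. end_vertex U x = v}. end_weight U x Y)"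
    by simp
  also have "\<dots> = (\<Sum>v\<in>interior_vertices U. \<Sum>x\<in>ends_at U v. end_weight U x Y)"
    by (intro sum.cong refl arg_cong2[where f = sum])
      (auto simp: ends_at_def boundary_ends_def interior_vertices_def)
  finally show ?thesis .
qed

lemma gamma0_foam_boundary_in_K0_relations:
  assumes C: "category C" and z: "zero_obj C z" and U: "wf_foam C U"
  shows "gamma0 (foam_boundary U) \<in> K0_relations C"
proof -
  have fin: "finite (fE U)" "finite (ends U)" using U finite_ends by (auto simp: wf_foam_def)
  have "(\<lambda>Y. \<Sum>e\<in>fE U. delta (fXh U e) Y - delta (fXt U e) Y) \<in> K0_relations C"
    using U K0_relations_iso[OF C z] by (intro K0_relations_sum fin) (auto simp: wf_foam_def)
  then have all_ends: "(\<lambda>Y. \<Sum>x\<in>ends U. end_weight U x Y) \<in> K0_relations C"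
    by (simp only: sum_end_weight_ends)
  have "(\<lambda>Y. \<Sum>v\<in>interior_vertices U. \<Sum>x\<in>ends_at U v. end_weight U x Y) \<in> K0_relations C"
  proof (rule K0_relations_sum)
    show "finite (interior_vertices U)" using U by (simp add: wf_foam_def interior_vertices_def)
  next
    fix v assume "v \<in> interior_vertices U"
    then have "wf_vertex_kind C U v" "fkind U v \<noteq> VBd"
      using U by (auto simp: wf_foam_iff interior_vertices_def)
    then show "(\<lambda>Y. \<Sum>x\<in>ends_at U v. end_weight U x Y) \<in> K0_relations C"
      by (cases "fkind U v") (auto simp: wf_vertex_kind_def intro: sum_end_weight_ends_at_vertex)
  qed
  then have interior_ends: "(\<lambda>Y. \<Sum>x\<in>ends U - boundary_ends U. end_weight U x Y) \<in> K0_relations C"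
    by (simp only: sum_end_weight_interior[OF U])
  have "gamma0 (foam_boundary U)
      = (\<lambda>Y. (\<Sum>x\<in>ends U. end_weight U x Y) - (\<Sum>x\<in>ends U - boundary_ends U. end_weight U x Y))"
  proof
    fix Y
    have "boundary_ends U \<subseteq> ends U" by (auto simp: boundary_ends_def)
    from sum.subset_diff[OF this fin(2), of "\<lambda>x. end_weight U x Y"] show "gamma0 (foam_boundary U) Y
        = (\<Sum>x\<in>ends U. end_weight U x Y) - (\<Sum>x\<in>ends U - boundary_ends U. end_weight U x Y)"
      by (simp add: gamma0_foam_boundary[OF fin(1)])
  qed
  then show ?thesis using K0_relations_diff[OF all_ends interior_ends] by simp
qed

definition foam_boundaries :: "('o, 'm) cat \<Rightarrow> 'o zfoam set" where
  "foam_boundaries C = {D. \<exists>U. wf_foam C U \<and> foam_boundary U = D}"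

lemma foam_boundary_in_zfoams: "category C \<Longrightarrow> wf_foam C U \<Longrightarrow> foam_boundary U \<in> zfoams C"
  using end_fiber_in_cat_obj finite_ends[of U]
  by (auto simp: foam_boundary_def zfoams_def wf_foam_def)

lemma foam_boundaries_subset_zfoams: "category C \<Longrightarrow> foam_boundaries C \<subseteq> zfoams C"
  using foam_boundary_in_zfoams by (auto simp: foam_boundaries_def)

definition empty_foam :: "('o, 'm) foam1" where
  "empty_foam = \<lparr>fV = {}, fE = {}, ftl = \<lambda>_. 0, fhd = \<lambda>_. 0, fXt = \<lambda>_. undefined,
     fXh = \<lambda>_. undefined, ftr = \<lambda>_. undefined, fkind = \<lambda>_. VBd, ffirst = \<lambda>_. (0, Hd),
     fsecond = \<lambda>_. (0, Hd), fthick = \<lambda>_. (0, Hd), fses1 = \<lambda>_. undefined, fses2 = \<lambda>_. undefined,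
     fCirc = {}, fcobj = \<lambda>_. undefined, fcmon = \<lambda>_. undefined\<rparr>"

lemma empty_in_foam_boundaries: "{#} \<in> foam_boundaries C"
proof -
  have "wf_foam C empty_foam" by (simp add: wf_foam_def empty_foam_def)
  moreover have "foam_boundary empty_foam = {#}"
    by (simp add: foam_boundary_def empty_foam_def ends_def)
  ultimately show ?thesis unfolding foam_boundaries_def by blast
qed

definition arc_foam :: "('o, 'm) cat \<Rightarrow> 'o \<Rightarrow> ('o, 'm) foam1" where
  "arc_foam C X = \<lparr>fV = {0, 1}, fE = {0}, ftl = \<lambda>_. 0, fhd = \<lambda>_. 1, fXt = \<lambda>_. X,
     fXh = \<lambda>_. X, ftr = \<lambda>_. cat_idn C X, fkind = \<lambda>_. VBd, ffirst = \<lambda>_. (0, Hd),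
     fsecond = \<lambda>_. (0, Hd), fthick = \<lambda>_. (0, Hd), fses1 = \<lambda>_. cat_idn C X, fses2 = \<lambda>_. cat_idn C X,
     fCirc = {}, fcobj = \<lambda>_. X, fcmon = \<lambda>_. cat_idn C X\<rparr>"

lemma arc_foam_simps [simp]:
  "fV (arc_foam C X) = {0, 1}" "fE (arc_foam C X) = {0}" "ftl (arc_foam C X) e = 0"
  "fhd (arc_foam C X) e = 1" "fXt (arc_foam C X) e = X" "fXh (arc_foam C X) e = X"
  "ftr (arc_foam C X) e = cat_idn C X" "fkind (arc_foam C X) v = VBd" "fCirc (arc_foam C X) = {}"
  by (simp_all add: arc_foam_def)

lemma ends_arc_foam: "ends (arc_foam C X) = {(0, Hd), (0, Tl)}"
  by (auto simp: ends_def UNIV_side)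

lemma arc_boundary_in_foam_boundaries:
  assumes C: "category C" and X: "X \<in> cat_obj C"
  shows "{#(True, X), (False, X)#} \<in> foam_boundaries C"
proof -
  have "ends_at (arc_foam C X) v = (if v = 0 then {(0, Tl)} else if v = 1 then {(0, Hd)} else {})" for v
    unfolding ends_at_def ends_arc_foam by auto
  then have "wf_foam C (arc_foam C X)"
    using cat_idn_hom[OF C X] iso_cat_idn[OF C X] by (auto simp: wf_foam_def)
  moreover have "{x \<in> ends (arc_foam C X). fkind (arc_foam C X) (end_vertex (arc_foam C X) x) = VBd}
      = {(0, Hd), (0, Tl)}"
    unfolding ends_arc_foam by auto
  then have "foam_boundary (arc_foam C X) = {#(True, X), (False, X)#}"
    unfolding foam_boundary_def by (simp only:) simp
  ultimately show ?thesis unfolding foam_boundaries_def by blast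
qed

text \<open>The foam with a single in-vertex: edges \<open>0\<close> and \<open>1\<close> carry \<open>X\<^sub>1\<close> and \<open>X\<^sub>3\<close> into it from the
  boundary vertices \<open>1\<close> and \<open>2\<close>, and edge \<open>2\<close> carries \<open>X\<^sub>2\<close> out of it to the boundary vertex \<open>3\<close>.\<close>

definition ses_fiber :: "('o, 'm) cat \<Rightarrow> 'm \<Rightarrow> 'm \<Rightarrow> nat \<Rightarrow> 'o" where
  "ses_fiber C f g e = (if e = 0 then cat_src C f else if e = 1 then cat_tgt C g else cat_tgt C f)"

definition ses_foam :: "('o, 'm) cat \<Rightarrow> 'm \<Rightarrow> 'm \<Rightarrow> ('o, 'm) foam1" where
  "ses_foam C f g = \<lparr>fV = {0, 1, 2, 3}, fE = {0, 1, 2},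
     ftl = \<lambda>e. if e = 0 then 1 else if e = 1 then 2 else 0,
     fhd = \<lambda>e. if e = 2 then 3 else 0,
     fXt = ses_fiber C f g, fXh = ses_fiber C f g, ftr = \<lambda>e. cat_idn C (ses_fiber C f g e),
     fkind = \<lambda>v. if v = 0 then VIn else VBd, ffirst = \<lambda>_. (0, Hd),
     fsecond = \<lambda>_. (1, Hd), fthick = \<lambda>_. (2, Tl), fses1 = \<lambda>_. f, fses2 = \<lambda>_. g,
     fCirc = {}, fcobj = \<lambda>_. undefined, fcmon = \<lambda>_. undefined\<rparr>"

lemma ses_foam_simps [simp]:
  "fV (ses_foam C f g) = {0, 1, 2, 3}" "fE (ses_foam C f g) = {0, 1, 2}"
  "ftl (ses_foam C f g) e = (if e = 0 then 1 else if e = 1 then 2 else 0)"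
  "fhd (ses_foam C f g) e = (if e = 2 then 3 else 0)"
  "fXt (ses_foam C f g) e = ses_fiber C f g e" "fXh (ses_foam C f g) e = ses_fiber C f g e"
  "ftr (ses_foam C f g) e = cat_idn C (ses_fiber C f g e)"
  "fkind (ses_foam C f g) v = (if v = 0 then VIn else VBd)"
  "ffirst (ses_foam C f g) v = (0, Hd)" "fsecond (ses_foam C f g) v = (1, Hd)"
  "fthick (ses_foam C f g) v = (2, Tl)" "fses1 (ses_foam C f g) v = f" "fses2 (ses_foam C f g) v = g"
  "fCirc (ses_foam C f g) = {}"
  by (simp_all add: ses_foam_def)

lemma ends_ses_foam: "ends (ses_foam C f g) = {(0, Hd), (0, Tl), (1, Hd), (1, Tl), (2, Hd), (2, Tl)}"
  by (auto simp: ends_def UNIV_side)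

lemma ses_boundary_in_foam_boundaries:
  assumes C: "category C" and ses: "short_exact C f g"
  shows "{#(True, cat_tgt C f), (False, cat_src C f), (False, cat_tgt C g)#} \<in> foam_boundaries C"
proof -
  let ?U = "ses_foam C f g"
  have arrs: "f \<in> cat_arr C" "g \<in> cat_arr C" "cat_tgt C f = cat_src C g"
    using ses by (auto simp: short_exact_def is_kernel_def)
  have obj: "ses_fiber C f g e \<in> cat_obj C" for e
    using arrs C unfolding category_def ses_fiber_def by auto
  have ends_at: "ends_at ?U v = (if v = 0 then {(0, Hd), (1, Hd), (2, Tl)} else if v = 1 then {(0, Tl)}
      else if v = 2 then {(1, Tl)} else if v = 3 then {(2, Hd)} else {})" for v
    unfolding ends_at_def ends_ses_foam by auto
  have "wf_vertex C ?U 0 Hd Tl"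
    using arrs ses by (simp add: wf_vertex_def ends_at ses_fiber_def hom_def)
  then have "wf_foam C ?U"
    using cat_idn_hom[OF C obj] iso_cat_idn[OF C obj] by (auto simp: wf_foam_def ends_at)
  moreover have "{x \<in> ends ?U. fkind ?U (end_vertex ?U x) = VBd} = {(0, Tl), (1, Tl), (2, Hd)}"
    unfolding ends_ses_foam by auto
  then have "foam_boundary ?U = {#(True, cat_tgt C f), (False, cat_src C f), (False, cat_tgt C g)#}"
    unfolding foam_boundary_def by (simp only:) (simp add: ses_fiber_def)
  ultimately show ?thesis unfolding foam_boundaries_def by blast
qed

definition left_end :: "edge_end \<Rightarrow> edge_end" where "left_end x = (2 * fst x, snd x)"
definition right_end :: "edge_end \<Rightarrow> edge_end" where "right_end x = (Suc (2 * fst x), snd x)"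

definition foam_union :: "('o, 'm) foam1 \<Rightarrow> ('o, 'm) foam1 \<Rightarrow> ('o, 'm) foam1" where
  "foam_union U W = \<lparr>fV = (\<lambda>v. 2 * v) ` fV U \<union> (\<lambda>v. Suc (2 * v)) ` fV W,
     fE = (\<lambda>v. 2 * v) ` fE U \<union> (\<lambda>v. Suc (2 * v)) ` fE W,
     ftl = \<lambda>e. if even e then 2 * ftl U (e div 2) else Suc (2 * ftl W (e div 2)),
     fhd = \<lambda>e. if even e then 2 * fhd U (e div 2) else Suc (2 * fhd W (e div 2)),
     fXt = \<lambda>e. if even e then fXt U (e div 2) else fXt W (e div 2),
     fXh = \<lambda>e. if even e then fXh U (e div 2) else fXh W (e div 2),
     ftr = \<lambda>e. if even e then ftr U (e div 2) else ftr W (e div 2),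
     fkind = \<lambda>e. if even e then fkind U (e div 2) else fkind W (e div 2),
     ffirst = \<lambda>e. if even e then left_end (ffirst U (e div 2)) else right_end (ffirst W (e div 2)),
     fsecond = \<lambda>e. if even e then left_end (fsecond U (e div 2)) else right_end (fsecond W (e div 2)),
     fthick = \<lambda>e. if even e then left_end (fthick U (e div 2)) else right_end (fthick W (e div 2)),
     fses1 = \<lambda>e. if even e then fses1 U (e div 2) else fses1 W (e div 2),
     fses2 = \<lambda>e. if even e then fses2 U (e div 2) else fses2 W (e div 2),
     fCirc = (\<lambda>v. 2 * v) ` fCirc U \<union> (\<lambda>v. Suc (2 * v)) ` fCirc W,
     fcobj = \<lambda>e. if even e then fcobj U (e div 2) else fcobj W (e div 2),
     fcmon = \<lambda>e. if even e then fcmon U (e div 2) else fcmon W (e div 2)\<rparr>"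

lemma foam_union_simps [simp]:
  "fV (foam_union U W) = (\<lambda>v. 2 * v) ` fV U \<union> (\<lambda>v. Suc (2 * v)) ` fV W"
  "fE (foam_union U W) = (\<lambda>v. 2 * v) ` fE U \<union> (\<lambda>v. Suc (2 * v)) ` fE W"
  "fCirc (foam_union U W) = (\<lambda>v. 2 * v) ` fCirc U \<union> (\<lambda>v. Suc (2 * v)) ` fCirc W"
  "ftl (foam_union U W) (2 * e) = 2 * ftl U e" "ftl (foam_union U W) (Suc (2 * e)) = Suc (2 * ftl W e)"
  "fhd (foam_union U W) (2 * e) = 2 * fhd U e" "fhd (foam_union U W) (Suc (2 * e)) = Suc (2 * fhd W e)"
  "fXt (foam_union U W) (2 * e) = fXt U e" "fXt (foam_union U W) (Suc (2 * e)) = fXt W e"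
  "fXh (foam_union U W) (2 * e) = fXh U e" "fXh (foam_union U W) (Suc (2 * e)) = fXh W e"
  "ftr (foam_union U W) (2 * e) = ftr U e" "ftr (foam_union U W) (Suc (2 * e)) = ftr W e"
  "fkind (foam_union U W) (2 * e) = fkind U e" "fkind (foam_union U W) (Suc (2 * e)) = fkind W e"
  "ffirst (foam_union U W) (2 * e) = left_end (ffirst U e)"
  "ffirst (foam_union U W) (Suc (2 * e)) = right_end (ffirst W e)"
  "fsecond (foam_union U W) (2 * e) = left_end (fsecond U e)"
  "fsecond (foam_union U W) (Suc (2 * e)) = right_end (fsecond W e)"
  "fthick (foam_union U W) (2 * e) = left_end (fthick U e)"
  "fthick (foam_union U W) (Suc (2 * e)) = right_end (fthick W e)"
  "fses1 (foam_union U W) (2 * e) = fses1 U e" "fses1 (foam_union U W) (Suc (2 * e)) = fses1 W e"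
  "fses2 (foam_union U W) (2 * e) = fses2 U e" "fses2 (foam_union U W) (Suc (2 * e)) = fses2 W e"
  "fcobj (foam_union U W) (2 * e) = fcobj U e" "fcobj (foam_union U W) (Suc (2 * e)) = fcobj W e"
  "fcmon (foam_union U W) (2 * e) = fcmon U e" "fcmon (foam_union U W) (Suc (2 * e)) = fcmon W e"
  by (simp_all add: foam_union_def)

lemma inj_left_end: "inj left_end" and inj_right_end: "inj right_end"
  by (auto simp: inj_def left_end_def right_end_def prod_eq_iff)

lemma snd_left_end_right_end [simp]: "snd (left_end x) = snd x" "snd (right_end x) = snd x"
  by (simp_all add: left_end_def right_end_def)

lemma end_vertex_left_end [simp]: "end_vertex (foam_union U W) (left_end x) = 2 * end_vertex U x"
  and end_vertex_right_end [simp]: "end_vertex (foam_union U W) (right_end x) = Suc (2 * end_vertex W x)"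
  and end_fiber_left_end [simp]: "end_fiber (foam_union U W) (left_end x) = end_fiber U x"
  and end_fiber_right_end [simp]: "end_fiber (foam_union U W) (right_end x) = end_fiber W x"
  by (cases x; cases "snd x"; simp add: left_end_def right_end_def)+

lemma ends_foam_union: "ends (foam_union U W) = left_end ` ends U \<union> right_end ` ends W"
proof -
  have "ends (foam_union U W) \<subseteq> left_end ` ends U \<union> right_end ` ends W"
  proof
    fix x assume "x \<in> ends (foam_union U W)"
    then obtain e s where x: "x = (e, s)" "e \<in> fE (foam_union U W)" unfolding ends_def by auto
    then show "x \<in> left_end ` ends U \<union> right_end ` ends W"
      by (auto simp: ends_def left_end_def right_end_def image_iff)
  qed
  moreover have "left_end ` ends U \<union> right_end ` ends W \<subseteq> ends (foam_union U W)"
    by (auto simp: ends_def left_end_def right_end_def)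
  ultimately show ?thesis by blast
qed

lemma left_end_neq_right_end: "left_end x \<noteq> right_end y"
  by (simp add: left_end_def right_end_def prod_eq_iff) presburger

lemma ends_at_foam_union_left: "ends_at (foam_union U W) (2 * u) = left_end ` ends_at U u"
  unfolding ends_at_def ends_foam_union by (auto simp: image_iff) presburger

lemma ends_at_foam_union_right: "ends_at (foam_union U W) (Suc (2 * u)) = right_end ` ends_at W u"
  unfolding ends_at_def ends_foam_union by (auto simp: image_iff) presburger

lemma wf_vertex_kind_foam_union_left:
  assumes "wf_vertex_kind C U u"
  shows "wf_vertex_kind C (foam_union U W) (2 * u)"
proof -
  have "card (left_end ` A) = card A" for A
    using card_image[OF inj_on_subset[OF inj_left_end subset_UNIV]] .
  then show ?thesis
    using assms by (auto simp: wf_vertex_kind_def wf_vertex_def ends_at_foam_union_left split: vkind.splits)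
qed

lemma wf_vertex_kind_foam_union_right:
  assumes "wf_vertex_kind C W u"
  shows "wf_vertex_kind C (foam_union U W) (Suc (2 * u))"
proof -
  have "card (right_end ` A) = card A" for A
    using card_image[OF inj_on_subset[OF inj_right_end subset_UNIV]] .
  then show ?thesis
    using assms by (auto simp: wf_vertex_kind_def wf_vertex_def ends_at_foam_union_right split: vkind.splits)
qed

lemma wf_foam_union: "wf_foam C U \<Longrightarrow> wf_foam C W \<Longrightarrow> wf_foam C (foam_union U W)"
  unfolding wf_foam_iff
  using wf_vertex_kind_foam_union_left[of C U _ W] wf_vertex_kind_foam_union_right[of C W _ U]
  by auto

lemma foam_boundary_foam_union:
  assumes "finite (fE U)" "finite (fE W)"
  shows "foam_boundary (foam_union U W) = foam_boundary U + foam_boundary W"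
proof -
  have fin: "finite (boundary_ends U)" "finite (boundary_ends W)"
    using assms by (simp_all add: finite_boundary_ends)
  have "boundary_ends (foam_union U W) = left_end ` boundary_ends U \<union> right_end ` boundary_ends W"
    unfolding boundary_ends_def ends_foam_union by auto
  moreover have "mset_set (left_end ` boundary_ends U \<union> right_end ` boundary_ends W)
      = mset_set (left_end ` boundary_ends U) + mset_set (right_end ` boundary_ends W)"
    using fin left_end_neq_right_end by (intro mset_set_Union) (auto dest: sym)
  ultimately have "mset_set (boundary_ends (foam_union U W))
      = image_mset left_end (mset_set (boundary_ends U)) + image_mset right_end (mset_set (boundary_ends W))"
    using image_mset_mset_set[OF inj_on_subset[OF inj_left_end subset_UNIV]]
      image_mset_mset_set[OF inj_on_subset[OF inj_right_end subset_UNIV]] by simp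
  then show ?thesis
    unfolding foam_boundary_def boundary_ends_def[symmetric] by (simp add: multiset.map_comp o_def)
qed

lemma foam_boundaries_add:
  assumes "D \<in> foam_boundaries C" "E \<in> foam_boundaries C"
  shows "D + E \<in> foam_boundaries C"
proof -
  obtain U W where U: "wf_foam C U" "foam_boundary U = D" and W: "wf_foam C W" "foam_boundary W = E"
    using assms unfolding foam_boundaries_def by blast
  then have "foam_boundary (foam_union U W) = D + E"
    using foam_boundary_foam_union by (auto simp: wf_foam_def)
  then show ?thesis using wf_foam_union[OF U(1) W(1)] unfolding foam_boundaries_def by blast
qed

lemma zneg_empty [simp]: "zneg {#} = {#}"
  by (simp add: zneg_def)

lemma zneg_add_mset [simp]: "zneg (add_mset (s, X) M) = add_mset (\<not> s, X) (zneg M)"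
  by (simp add: zneg_def)

lemma plus_zneg_in_foam_boundaries:
  assumes C: "category C"
  shows "M \<in> zfoams C \<Longrightarrow> M + zneg M \<in> foam_boundaries C"
proof (induction M)
  case empty
  then show ?case using empty_in_foam_boundaries by simp
next
  case (add a M)
  obtain s X where a: "a = (s, X)" by (cases a)
  have M: "M \<in> zfoams C" and X: "X \<in> cat_obj C" using add.prems a by (auto simp: zfoams_def)
  have arc: "{#(s, X), (\<not> s, X)#} \<in> foam_boundaries C"
    using arc_boundary_in_foam_boundaries[OF C X] by (cases s) (auto simp: add_mset_commute)
  have "add_mset a M + zneg (add_mset a M) = (M + zneg M) + {#(s, X), (\<not> s, X)#}"
    by (simp add: a)
  also have "\<dots> \<in> foam_boundaries C" using foam_boundaries_add[OF add.IH[OF M] arc] .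
  finally show ?case .
qed

lemma in_foam_boundaries_if_gamma0_eq_0:
  assumes C: "category C" and Q: "Q \<in> zfoams C" and gamma0: "gamma0 Q = (\<lambda>_. 0)"
  shows "Q \<in> foam_boundaries C"
proof -
  let ?P = "filter_mset fst Q"
  have "Q = ?P + zneg ?P"
  proof (rule multiset_eqI)
    fix x :: "bool \<times> 'a"
    obtain s X where x: "x = (s, X)" by (cases x)
    have "count Q (True, X) = count Q (False, X)" using fun_cong[OF gamma0, of X] by (simp add: gamma0_def)
    then show "count Q x = count (?P + zneg ?P) x" by (cases s) (simp_all add: x count_zneg)
  qed
  moreover have "?P \<in> zfoams C" using Q by (auto simp: zfoams_def)
  ultimately show ?thesis using plus_zneg_in_foam_boundaries[OF C] by metis
qed

lemma K0_relation_eq_foam_boundaries_diff: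
  assumes C: "category C"
  shows "\<phi> \<in> K0_relations C \<Longrightarrow>
    \<exists>D \<in> foam_boundaries C. \<exists>D' \<in> foam_boundaries C. \<phi> = (\<lambda>Y. gamma0 D Y - gamma0 D' Y)"
proof (induction rule: K0_relations.induct)
  case zero
  show ?case using empty_in_foam_boundaries by (force simp: gamma0_def)
next
  case (gen f g)
  have "(\<lambda>Y. delta (cat_tgt C f) Y - delta (cat_src C f) Y - delta (cat_tgt C g) Y)
      = (\<lambda>Y. gamma0 {#(True, cat_tgt C f), (False, cat_src C f), (False, cat_tgt C g)#} Y - gamma0 {#} Y)"
    by (auto simp: gamma0_def delta_def fun_eq_iff)
  then show ?case using ses_boundary_in_foam_boundaries[OF C gen] empty_in_foam_boundaries by blast
next
  case (add \<phi> \<psi>)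
  then obtain D\<^sub>1 D\<^sub>1' D\<^sub>2 D\<^sub>2' where D: "D\<^sub>1 \<in> foam_boundaries C" "D\<^sub>1' \<in> foam_boundaries C"
      "D\<^sub>2 \<in> foam_boundaries C" "D\<^sub>2' \<in> foam_boundaries C"
    and "\<phi> = (\<lambda>Y. gamma0 D\<^sub>1 Y - gamma0 D\<^sub>1' Y)" "\<psi> = (\<lambda>Y. gamma0 D\<^sub>2 Y - gamma0 D\<^sub>2' Y)"
    by blast
  then have "(\<lambda>Y. \<phi> Y + \<psi> Y) = (\<lambda>Y. gamma0 (D\<^sub>1 + D\<^sub>2) Y - gamma0 (D\<^sub>1' + D\<^sub>2') Y)"
    by (simp add: gamma0_plus fun_eq_iff algebra_simps)
  then show ?case using foam_boundaries_add D by blast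
next
  case (neg \<phi>)
  then show ?case by fastforce
qed

lemma equiv_cob_rel: "equiv (zfoams C) (cob_rel C)"
proof (rule equivI)
  let ?R = "\<lambda>A B. cobordant C A B \<or> cobordant C B A"
  have "symp ?R\<^sup>*\<^sup>*" by (rule symp_rtranclp) (auto simp: symp_def)
  then show "sym (cob_rel C)" by (auto simp: sym_def symp_def cob_rel_def)
  show "trans (cob_rel C)" by (auto simp: trans_def cob_rel_def intro: rtranclp_trans)
qed (auto simp: refl_on_def cob_rel_def)

lemma cob_rel_plus_boundary:
  assumes C: "category C" and M: "M \<in> zfoams C" and D: "D \<in> foam_boundaries C"
  shows "(M, M + D) \<in> cob_rel C"
proof -
  have "D + (M + zneg M) \<in> foam_boundaries C"
    using foam_boundaries_add[OF D plus_zneg_in_foam_boundaries[OF C M]] .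
  then have "cobordant C M (M + D)"
    unfolding foam_boundaries_def cobordant_def by (auto simp: ac_simps)
  moreover have "M + D \<in> zfoams C" using foam_boundaries_subset_zfoams[OF C] D M zfoams_plus by blast
  ultimately show ?thesis using M by (auto simp: cob_rel_def)
qed

lemma cob_rel_if_gamma0_eq:
  assumes C: "category C" and M: "M \<in> zfoams C" and N: "N \<in> zfoams C" and eq: "gamma0 M = gamma0 N"
  shows "(M, N) \<in> cob_rel C"
proof -
  have "M + zneg N \<in> foam_boundaries C"
    using eq by (intro in_foam_boundaries_if_gamma0_eq_0[OF C] zfoams_plus[OF M zfoams_zneg[OF N]])
      (simp add: gamma0_plus gamma0_zneg)
  from cob_rel_plus_boundary[OF C N this] have "(N, M + (N + zneg N)) \<in> cob_rel C"
    by (simp add: ac_simps)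
  moreover have "(M, M + (N + zneg N)) \<in> cob_rel C"
    using cob_rel_plus_boundary[OF C M plus_zneg_in_foam_boundaries[OF C N]] .
  ultimately show ?thesis using equiv_cob_rel[of C] by (meson equivE symD transD)
qed

lemma cob_rel_if_K0_relations:
  assumes C: "category C" and M: "M \<in> zfoams C" and N: "N \<in> zfoams C"
    and rel: "(\<lambda>Y. gamma0 M Y - gamma0 N Y) \<in> K0_relations C"
  shows "(M, N) \<in> cob_rel C"
proof -
  obtain D D' where D: "D \<in> foam_boundaries C" "D' \<in> foam_boundaries C"
    and diff: "(\<lambda>Y. gamma0 M Y - gamma0 N Y) = (\<lambda>Y. gamma0 D Y - gamma0 D' Y)"
    using K0_relation_eq_foam_boundaries_diff[OF C rel] by blast
  have "gamma0 (M + D') = gamma0 (N + D)"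
    using diff by (simp add: gamma0_plus fun_eq_iff algebra_simps)
  then have "(M + D', N + D) \<in> cob_rel C"
    using foam_boundaries_subset_zfoams[OF C] D M N zfoams_plus
    by (intro cob_rel_if_gamma0_eq[OF C]) auto
  moreover have "(M, M + D') \<in> cob_rel C" "(N, N + D) \<in> cob_rel C"
    using cob_rel_plus_boundary[OF C] M N D by auto
  ultimately show ?thesis using equiv_cob_rel[of C] by (meson equivE symD transD)
qed

lemma cobordant_gamma0_diff_in_K0_relations:
  assumes C: "category C" and z: "zero_obj C z" and "cobordant C A B"
  shows "(\<lambda>Y. gamma0 B Y - gamma0 A Y) \<in> K0_relations C"
proof -
  obtain U where "wf_foam C U" "foam_boundary U = B + zneg A"
    using assms(3) unfolding cobordant_def by blast
  then show ?thesis
    using gamma0_foam_boundary_in_K0_relations[OF C z] by (fastforce simp: gamma0_plus gamma0_zneg)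
qed

lemma K0_relations_if_cob_rel:
  assumes C: "category C" and z: "zero_obj C z" and "(M, N) \<in> cob_rel C"
  shows "(\<lambda>Y. gamma0 M Y - gamma0 N Y) \<in> K0_relations C"
proof -
  have "(\<lambda>A B. cobordant C A B \<or> cobordant C B A)\<^sup>*\<^sup>* M N"
    using assms(3) by (simp add: cob_rel_def)
  then show ?thesis
  proof (induction rule: rtranclp_induct)
    case base
    show ?case using K0_relations.zero by simp
  next
    case (step P Q)
    have "(\<lambda>Y. gamma0 P Y - gamma0 Q Y) \<in> K0_relations C"
      using step(2) cobordant_gamma0_diff_in_K0_relations[OF C z] K0_relations.neg by fastforce
    from K0_relations.add[OF step.IH this]
    show ?case by (simp add: algebra_simps)
  qed
qed

lemma cob_rel_iff_K0_rel:
  assumes C: "category C" and z: "zero_obj C z" and M: "M \<in> zfoams C" and N: "N \<in> zfoams C"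
  shows "(M, N) \<in> cob_rel C \<longleftrightarrow> (gamma0 M, gamma0 N) \<in> K0_rel C"
  using K0_relations_if_cob_rel[OF C z] cob_rel_if_K0_relations[OF C M N]
    gamma0_in_free_ab[OF M] gamma0_in_free_ab[OF N]
  by (auto simp: K0_rel_def)

lemma bij_betw_quotient_map:
  assumes A: "equiv A R" and B: "equiv B S" and f: "f ` A \<subseteq> B"
    and reflects: "\<And>x y. x \<in> A \<Longrightarrow> y \<in> A \<Longrightarrow> (x, y) \<in> R \<longleftrightarrow> (f x, f y) \<in> S"
    and onto: "\<And>b. b \<in> B \<Longrightarrow> \<exists>a \<in> A. (f a, b) \<in> S"
  shows "bij_betw (\<lambda>c. S `` {f (SOME x. x \<in> c)}) (A // R) (B // S)"
proof -
  let ?rep = "\<lambda>c. SOME x. x \<in> c"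
  have rep: "?rep c \<in> A" "c = R `` {?rep c}" if "c \<in> A // R" for c
  proof -
    obtain a where a: "a \<in> A" "c = R `` {a}" using \<open>c \<in> A // R\<close> by (rule quotientE)
    then have "?rep c \<in> c" using equiv_class_self[OF A] by (metis someI)
    then have r: "(a, ?rep c) \<in> R" using a by simp
    then show "?rep c \<in> A" using equiv_type[OF A] by blast
    show "c = R `` {?rep c}" using trans[OF a(2) equiv_class_eq[OF A r]] .
  qed
  show ?thesis
  proof (rule bij_betw_imageI)
    show "inj_on (\<lambda>c. S `` {f (?rep c)}) (A // R)"
    proof (rule inj_onI)
      fix c d assume c: "c \<in> A // R" and d: "d \<in> A // R" and "S `` {f (?rep c)} = S `` {f (?rep d)}"
      then have "(f (?rep c), f (?rep d)) \<in> S" using eq_equiv_class_iff[OF B] f rep by blast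
      then have "R `` {?rep c} = R `` {?rep d}" using reflects rep c d equiv_class_eq[OF A] by blast
      then show "c = d" using rep c d by metis
    qed
    show "(\<lambda>c. S `` {f (?rep c)}) ` (A // R) = B // S"
    proof
      show "(\<lambda>c. S `` {f (?rep c)}) ` (A // R) \<subseteq> B // S" using rep(1) f by (auto intro!: quotientI)
    next
      show "B // S \<subseteq> (\<lambda>c. S `` {f (?rep c)}) ` (A // R)"
      proof
        fix e assume "e \<in> B // S"
        then obtain b where b: "b \<in> B" "e = S `` {b}" by (rule quotientE)
        then obtain a where a: "a \<in> A" "(f a, b) \<in> S" using onto by blast
        have c: "R `` {a} \<in> A // R" using a(1) by (rule quotientI)
        then have "(a, ?rep (R `` {a})) \<in> R" using rep a(1) eq_equiv_class_iff[OF A] by metis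
        then have "(f (?rep (R `` {a})), b) \<in> S" using reflects rep[OF c] a B
          by (meson equivE symD transD)
        then have "e = S `` {f (?rep (R `` {a}))}" using b equiv_class_eq[OF B] by metis
        then show "e \<in> (\<lambda>c. S `` {f (?rep c)}) ` (A // R)" using c by blast
      qed
    qed
  qed
qed

theorem mainTheorem3:
  fixes C :: "('o, 'm) cat"
  assumes "abelian_cat C"
  shows "(\<forall>M N. (M, N) \<in> cob_rel C \<longrightarrow> (gamma0 M, gamma0 N) \<in> K0_rel C)
       \<and> bij_betw (\<lambda>c. K0_rel C `` {gamma0 (SOME M. M \<in> c)}) (Cob0 C) (K0 C)
       \<and> (\<forall>M N :: 'o zfoam. gamma0 (M + N) = (\<lambda>Y. gamma0 M Y + gamma0 N Y))"
proof (intro conjI allI impI)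
  have C: "category C" using assms by (simp add: abelian_cat_def)
  obtain z where z: "zero_obj C z" using assms by (auto simp: abelian_cat_def)
  note cob_rel_iff = cob_rel_iff_K0_rel[OF C z]
  show "(gamma0 M, gamma0 N) \<in> K0_rel C" if "(M, N) \<in> cob_rel C" for M N
    using that cob_rel_iff by (auto simp: cob_rel_def)
  show "bij_betw (\<lambda>c. K0_rel C `` {gamma0 (SOME M. M \<in> c)}) (Cob0 C) (K0 C)"
    unfolding Cob0_def K0_def
  proof (rule bij_betw_quotient_map[OF equiv_cob_rel equiv_K0_rel])
    show "gamma0 ` zfoams C \<subseteq> free_ab C" using gamma0_in_free_ab by blast
    show "\<exists>M \<in> zfoams C. (gamma0 M, \<phi>) \<in> K0_rel C" if "\<phi> \<in> free_ab C" for \<phi>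
      using gamma0_onto_free_ab[OF that] equiv_K0_rel[of C] that by (metis equivE refl_onD)
  qed (rule cob_rel_iff)
  show "gamma0 (M + N) = (\<lambda>Y. gamma0 M Y + gamma0 N Y)" for M N :: "'o zfoam"
    by (rule gamma0_plus)
qed

end
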